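(* Let $f:\mathbb{R}^n\to\mathbb{R}$ be bounded below and continuously differentiable with $\nabla f$ Lipschitz with constant $L_{\nabla f}$. Let $x\in\mathbb{R}^n$, $\Delta>0$, points $y_1,\ldots,y_p$ with $\|y_i-x\|\le\beta\Delta$ for some $\beta>0$ and all $i$, and let $m$ be the minimum Frobenius norm quadratic interpolation model described in the context, with $\hat F$ invertible. Then for all $y\in B(x,\Delta)$, $|m(y)-f(y)|\le\kappa_{\mathrm{mf}}\Delta^2$ and $\|\nabla m(y)-\nabla f(y)\|\le\kappa_{\mathrm{mg}}\Delta$, where $$\kappa_{\mathrm{mf}}=\frac{L_{\nabla f}+\kappa_H}{2}(1+\sqrt n)\beta^2\|\hat M^\dagger\|_\infty+\frac{L_{\nabla f}+\kappa_H}{2},\qquad\kappa_{\mathrm{mg}}=2\kappa_{\mathrm{mf}}+2\kappa_H,$$ and $\kappa_H:=\frac{L_{\nabla f}}{2}p\beta^4\|\hat F^{-1}\|_\infty$.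
   Context: Here $n+2\le p\le(n+1)(n+2)/2-1$. Let $\hat s_i=(y_i-x)/\Delta$, $\hat M\in\mathbb{R}^{p\times(n+1)}$ with $i$-th row $[1,\hat s_i^T]$ (with Moore–Penrose pseudoinverse $\hat M^\dagger$), $\hat P\in\mathbb{R}^{p\times p}$ with $\hat P_{ij}=\tfrac12(\hat s_i^T\hat s_j)^2$, and $\hat F=\begin{bmatrix}\hat P&\hat M\\ \hat M^T&0\end{bmatrix}$. The model is $m(y)=c+g^T(y-x)+\tfrac12(y-x)^TH(y-x)$ where $(\hat\lambda_1,\ldots,\hat\lambda_p,c,\hat g)$ solves $\hat F[\hat\lambda;c;\hat g]=[f(y_1);\ldots;f(y_p);0;0_n]$, $g=\hat g/\Delta$, $H=\sum_{i}\lambda_i(y_i-x)(y_i-x)^T$ with $\lambda_i=\hat\lambda_i/\Delta^4$; equivalently $(c,g,H)$ minimizes $\tfrac14\|H\|_F^2$ over symmetric $H$ subject to $m(y_i)=f(y_i)$ for all $i$. $\|A\|_\infty$ is the maximum absolute row sum; $B(x,\Delta)=\{y:\|y-x\|\le\Delta\}$. *)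

theory Defs
  imports "HOL-Analysis.Analysis"
begin

text \<open>Matrices of variable size are represented as functions nat => nat => real;
  only entries with indices inside the stated dimensions are meaningful.\<close>

type_synonym rmat = "nat \<Rightarrow> nat \<Rightarrow> real"

definition mmul :: "rmat \<Rightarrow> nat \<Rightarrow> rmat \<Rightarrow> rmat" where
  "mmul A k B = (\<lambda>i j. \<Sum>l<k. A i l * B l j)"

definition supported :: "nat \<Rightarrow> nat \<Rightarrow> rmat \<Rightarrow> bool" where
  "supported r c A \<longleftrightarrow> (\<forall>i j. (r \<le> i \<or> c \<le> j) \<longrightarrow> A i j = 0)"

definition mat_norm_inf :: "nat \<Rightarrow> nat \<Rightarrow> rmat \<Rightarrow> real" where
  "mat_norm_inf r c A = Max ((\<lambda>i. \<Sum>j<c. \<bar>A i j\<bar>) ` {..<r})"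

definition mat_invertible :: "nat \<Rightarrow> rmat \<Rightarrow> bool" where
  "mat_invertible N A \<longleftrightarrow> (\<exists>B. \<forall>i<N. \<forall>j<N.
      mmul A N B i j = (if i = j then 1 else 0) \<and> mmul B N A i j = (if i = j then 1 else 0))"

definition mat_inv :: "nat \<Rightarrow> rmat \<Rightarrow> rmat" where
  "mat_inv N A = (THE B. supported N N B \<and> (\<forall>i<N. \<forall>j<N.
      mmul A N B i j = (if i = j then 1 else 0) \<and> mmul B N A i j = (if i = j then 1 else 0)))"

definition pinv :: "nat \<Rightarrow> nat \<Rightarrow> rmat \<Rightarrow> rmat" where
  "pinv r c M = (THE X. supported c r X
      \<and> (\<forall>i<r. \<forall>j<c. mmul (mmul M c X) r M i j = M i j)
      \<and> (\<forall>i<c. \<forall>j<r. mmul (mmul X r M) c X i j = X i j)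
      \<and> (\<forall>i<r. \<forall>j<r. mmul M c X i j = mmul M c X j i)
      \<and> (\<forall>i<c. \<forall>j<c. mmul X r M i j = mmul X r M j i))"

text \<open>A fixed enumeration 0..n-1 of the coordinate index type; the norms in the
  theorem are invariant under the choice of ordering of coordinates.\<close>
definition coord :: "nat \<Rightarrow> 'n::finite" where
  "coord = (SOME e. bij_betw e {..<CARD('n)} (UNIV :: 'n set))"

definition coord_idx :: "'n::finite \<Rightarrow> nat" where
  "coord_idx = inv_into {..<CARD('n)} coord"

definition shat :: "real^'n \<Rightarrow> real \<Rightarrow> (nat \<Rightarrow> real^'n) \<Rightarrow> nat \<Rightarrow> real^'n" where
  "shat x \<Delta> y i = (1 / \<Delta>) *\<^sub>R (y i - x)"

definition Mhat :: "real^'n \<Rightarrow> real \<Rightarrow> (nat \<Rightarrow> real^'n) \<Rightarrow> nat \<Rightarrow> rmat" where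
  "Mhat x \<Delta> y p = (\<lambda>i j. if i < p \<and> j < CARD('n) + 1 then
      (if j = 0 then 1 else shat x \<Delta> y i $ coord (j - 1)) else 0)"

definition Phat :: "real^'n \<Rightarrow> real \<Rightarrow> (nat \<Rightarrow> real^'n) \<Rightarrow> nat \<Rightarrow> rmat" where
  "Phat x \<Delta> y p = (\<lambda>i j. if i < p \<and> j < p then
      (1/2) * (shat x \<Delta> y i \<bullet> shat x \<Delta> y j)^2 else 0)"

definition Fhat :: "real^'n \<Rightarrow> real \<Rightarrow> (nat \<Rightarrow> real^'n) \<Rightarrow> nat \<Rightarrow> rmat" where
  "Fhat x \<Delta> y p = (\<lambda>i j.
      if i < p \<and> j < p then Phat x \<Delta> y p i j
      else if i < p \<and> p \<le> j \<and> j < p + CARD('n) + 1 then Mhat x \<Delta> y p i (j - p)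
      else if p \<le> i \<and> i < p + CARD('n) + 1 \<and> j < p then Mhat x \<Delta> y p j (i - p)
      else 0)"

text \<open>Solution vector \<open>[\<lambda>hat; c; ghat]\<close> of \<open>Fhat z = [f(y_1);...;f(y_p);0;0_n]\<close>.\<close>
definition model_sol :: "(real^'n \<Rightarrow> real) \<Rightarrow> real^'n \<Rightarrow> real \<Rightarrow> (nat \<Rightarrow> real^'n) \<Rightarrow> nat \<Rightarrow> nat \<Rightarrow> real" where
  "model_sol f x \<Delta> y p = (THE z. (\<forall>i. p + CARD('n) + 1 \<le> i \<longrightarrow> z i = 0) \<and>
      (\<forall>i < p + CARD('n) + 1. (\<Sum>j < p + CARD('n) + 1. Fhat x \<Delta> y p i j * z j)
          = (if i < p then f (y i) else 0)))"

definition model_c :: "(real^'n \<Rightarrow> real) \<Rightarrow> real^'n \<Rightarrow> real \<Rightarrow> (nat \<Rightarrow> real^'n) \<Rightarrow> nat \<Rightarrow> real" where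
  "model_c f x \<Delta> y p = model_sol f x \<Delta> y p p"

definition model_g :: "(real^'n \<Rightarrow> real) \<Rightarrow> real^'n \<Rightarrow> real \<Rightarrow> (nat \<Rightarrow> real^'n) \<Rightarrow> nat \<Rightarrow> real^'n" where
  "model_g f x \<Delta> y p = (\<chi> k. model_sol f x \<Delta> y p (p + 1 + coord_idx k) / \<Delta>)"

definition model_H :: "(real^'n \<Rightarrow> real) \<Rightarrow> real^'n \<Rightarrow> real \<Rightarrow> (nat \<Rightarrow> real^'n) \<Rightarrow> nat \<Rightarrow> real^'n^'n" where
  "model_H f x \<Delta> y p = (\<chi> a b. \<Sum>i<p. (model_sol f x \<Delta> y p i / \<Delta>^4) * (y i - x)$a * (y i - x)$b)"

definition model :: "(real^'n \<Rightarrow> real) \<Rightarrow> real^'n \<Rightarrow> real \<Rightarrow> (nat \<Rightarrow> real^'n) \<Rightarrow> nat \<Rightarrow> real^'n \<Rightarrow> real" where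
  "model f x \<Delta> y p z = model_c f x \<Delta> y p + model_g f x \<Delta> y p \<bullet> (z - x)
      + (1/2) * ((z - x) \<bullet> (model_H f x \<Delta> y p *v (z - x)))"

definition model_grad :: "(real^'n \<Rightarrow> real) \<Rightarrow> real^'n \<Rightarrow> real \<Rightarrow> (nat \<Rightarrow> real^'n) \<Rightarrow> nat \<Rightarrow> real^'n \<Rightarrow> real^'n" where
  "model_grad f x \<Delta> y p z = model_g f x \<Delta> y p + model_H f x \<Delta> y p *v (z - x)"

end

theory Submission
  imports Defs "Jordan_Normal_Form.Determinant"
begin

(* The coefficient vector z of the model solves Fhat z = (f(y_1), ..., f(y_p), 0, 0).  The vector
   w = (0, f(x), Delta grad f(x)) of the linear Taylor polynomial of f at x satisfies
   Fhat w = (f(x) + grad f(x)^T (y_i - x), 0, 0), so z - w = Fhat^-1 r where the r_i are Taylor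
   remainders, |r_i| <= L/2 (beta Delta)^2.  This bounds the Hessian weights lambda_i and hence
   ||H|| <= kappa_H.  Interpolation at the y_i then says that Mhat maps the scaled error
   (c - f(x), Delta (g - grad f(x))) of the linear part to the Taylor remainders minus the Hessian
   terms, which are O((L + kappa_H) beta^2 Delta^2).  Invertibility of Fhat forces Mhat to have
   full column rank, so its pseudoinverse is a left inverse and bounds this error.  Both estimates
   on B(x, Delta) follow with the Taylor bound at the point itself. *)

section \<open>Moore-Penrose inverses\<close>

definition penrose_conditions :: "real mat \<Rightarrow> real mat \<Rightarrow> bool" where
  "penrose_conditions M X \<longleftrightarrow> M * X * M = M \<and> X * M * X = X
     \<and> transpose_mat (M * X) = M * X \<and> transpose_mat (X * M) = X * M"

lemma penrose_conditions_products_eq: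
  assumes M: "M \<in> carrier_mat r c" and X: "X \<in> carrier_mat c r" and Y: "Y \<in> carrier_mat c r"
    and "penrose_conditions M X" and "penrose_conditions M Y"
  shows "M * X = M * Y" and "X * M = Y * M"
proof -
  have X1: "M * X * M = M" and X3: "transpose_mat (M * X) = M * X"
    and X4: "transpose_mat (X * M) = X * M"
    and Y1: "M * Y * M = M" and Y3: "transpose_mat (M * Y) = M * Y"
    and Y4: "transpose_mat (Y * M) = Y * M"
    using assms(4,5) unfolding penrose_conditions_def by auto
  have "M * X * (M * Y) = M * X * M * Y" by (metis M X Y assoc_mult_mat mult_carrier_mat)
  also have "\<dots> = M * Y" by (simp only: X1)
  finally have "M * Y = transpose_mat (M * X * (M * Y))" using Y3 by simp
  also have "\<dots> = transpose_mat (M * Y) * transpose_mat (M * X)"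
    using M X Y by (intro transpose_mult) auto
  also have "\<dots> = M * Y * M * X" using X3 Y3 M X Y by (metis assoc_mult_mat mult_carrier_mat)
  also have "\<dots> = M * X" by (simp only: Y1)
  finally show "M * X = M * Y" by simp
  have "X * M * (Y * M) = X * (M * Y * M)" by (metis M X Y assoc_mult_mat mult_carrier_mat)
  also have "\<dots> = X * M" by (simp only: Y1)
  finally have "X * M = transpose_mat (X * M * (Y * M))" using X4 by simp
  also have "\<dots> = transpose_mat (Y * M) * transpose_mat (X * M)"
    using M X Y by (intro transpose_mult) auto
  also have "\<dots> = Y * (M * X * M)" using X4 Y4 M X Y by (metis assoc_mult_mat mult_carrier_mat)
  also have "\<dots> = Y * M" by (simp only: X1)
  finally show "X * M = Y * M" .
qed

lemma penrose_conditions_unique: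
  assumes M: "M \<in> carrier_mat r c" and X: "X \<in> carrier_mat c r" and Y: "Y \<in> carrier_mat c r"
    and "penrose_conditions M X" and "penrose_conditions M Y"
  shows "X = Y"
proof -
  note products = penrose_conditions_products_eq[OF assms]
  have "X = X * M * X" using assms(4) unfolding penrose_conditions_def by simp
  also have "\<dots> = X * (M * Y)" using M X Y products(1) by simp
  also have "\<dots> = Y * M * Y" using M X Y products(2) by (metis assoc_mult_mat)
  also have "\<dots> = Y" using assms(5) unfolding penrose_conditions_def by simp
  finally show ?thesis .
qed

lemma gram_mat_invertible:
  fixes M :: "real mat"
  assumes M: "M \<in> carrier_mat r c"
    and inj: "\<And>v. v \<in> carrier_vec c \<Longrightarrow> M *\<^sub>v v = 0\<^sub>v r \<Longrightarrow> v = 0\<^sub>v c"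
  shows "\<exists>K \<in> carrier_mat c c. K * (transpose_mat M * M) = 1\<^sub>m c"
proof -
  let ?G = "transpose_mat M * M"
  have G: "?G \<in> carrier_mat c c" using M by simp
  have "v = 0\<^sub>v c" if v: "v \<in> carrier_vec c" and Gv: "?G *\<^sub>v v = 0\<^sub>v c" for v
  proof -
    have Mv: "M *\<^sub>v v \<in> carrier_vec r" using M v by simp
    have "(M *\<^sub>v v) \<bullet>c (M *\<^sub>v v) = (transpose_mat M *\<^sub>v (M *\<^sub>v v)) \<bullet> v"
      using transpose_vec_mult_scalar[OF M v Mv] by simp
    also have "\<dots> = 0" using Gv M v by simp
    finally have "M *\<^sub>v v = 0\<^sub>v r" using conjugate_square_eq_0_vec[OF Mv] by blast
    then show ?thesis using inj v by blast
  qed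
  then have "det ?G \<noteq> 0" using det_0_iff_vec_prod_zero_field[OF G] by blast
  from det_non_zero_imp_unit[OF G this, of "()"]
  show ?thesis unfolding Units_def ring_mat_def by auto
qed

text \<open>For full column rank the pseudoinverse is \<open>(M\<^sup>T M)\<^sup>-\<^sup>1 M\<^sup>T\<close>.\<close>

lemma penrose_conditions_full_column_rank:
  fixes M :: "real mat"
  assumes M: "M \<in> carrier_mat r c"
    and inj: "\<And>v. v \<in> carrier_vec c \<Longrightarrow> M *\<^sub>v v = 0\<^sub>v r \<Longrightarrow> v = 0\<^sub>v c"
  shows "\<exists>X \<in> carrier_mat c r. penrose_conditions M X \<and> X * M = 1\<^sub>m c"
proof -
  let ?G = "transpose_mat M * M"
  have tM: "transpose_mat M \<in> carrier_mat c r" and G: "?G \<in> carrier_mat c c" using M by auto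
  obtain K where K: "K \<in> carrier_mat c c" and KG: "K * ?G = 1\<^sub>m c"
    using gram_mat_invertible[OF M inj] by blast
  have tK: "transpose_mat K \<in> carrier_mat c c" using K by simp
  have GK: "?G * K = 1\<^sub>m c" by (rule mat_mult_left_right_inverse[OF K G KG])
  have Gsym: "transpose_mat ?G = ?G" using transpose_mult[OF tM M] by simp
  have "transpose_mat K * ?G = transpose_mat (?G * K)" using transpose_mult[OF G K] Gsym by simp
  also have "\<dots> = 1\<^sub>m c" using GK by simp
  finally have tKG: "transpose_mat K * ?G = 1\<^sub>m c" .
  have "transpose_mat K = transpose_mat K * (?G * K)" using GK tK by simp
  also have "\<dots> = transpose_mat K * ?G * K" using tK G K by (simp only: assoc_mult_mat)
  also have "\<dots> = K" using tKG K by simp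
  finally have Ksym: "transpose_mat K = K" .
  define X where "X = K * transpose_mat M"
  have X: "X \<in> carrier_mat c r" unfolding X_def using K tM by simp
  have XM: "X * M = 1\<^sub>m c" unfolding X_def using K tM M KG by simp
  have "transpose_mat (M * X) = M * X"
    unfolding X_def using transpose_mult[OF M mult_carrier_mat[OF K tM]] transpose_mult[OF K tM] Ksym
      M K tM by simp
  moreover have "M * X * M = M" using XM M X by (metis assoc_mult_mat right_mult_one_mat)
  ultimately have "penrose_conditions M X" using XM X unfolding penrose_conditions_def by simp
  then show ?thesis using X XM by blast
qed

definition mat_of_rmat :: "nat \<Rightarrow> nat \<Rightarrow> rmat \<Rightarrow> real mat" where
  "mat_of_rmat r c A = mat r c (\<lambda>(i, j). A i j)"

lemma mat_of_rmat_carrier [simp]: "mat_of_rmat r c A \<in> carrier_mat r c"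
  unfolding mat_of_rmat_def by simp

lemma index_mat_of_rmat [simp]:
  "i < r \<Longrightarrow> j < c \<Longrightarrow> mat_of_rmat r c A $$ (i, j) = A i j"
  "dim_row (mat_of_rmat r c A) = r" "dim_col (mat_of_rmat r c A) = c"
  unfolding mat_of_rmat_def by simp_all

lemma mat_of_rmat_mmul: "mat_of_rmat r c (mmul A k B) = mat_of_rmat r k A * mat_of_rmat k c B"
  by (rule eq_matI) (auto simp: mat_of_rmat_def mmul_def scalar_prod_def atLeast0LessThan)

lemma mat_of_rmat_eq_iff:
  "mat_of_rmat r c A = mat_of_rmat r c B \<longleftrightarrow> (\<forall>i<r. \<forall>j<c. A i j = B i j)"
proof
  show "mat_of_rmat r c A = mat_of_rmat r c B \<Longrightarrow> \<forall>i<r. \<forall>j<c. A i j = B i j"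
    by (metis index_mat_of_rmat)
qed (intro eq_matI, auto simp: mat_of_rmat_def)

lemma transpose_mat_of_rmat_eq_iff:
  "transpose_mat (mat_of_rmat r r A) = mat_of_rmat r r A \<longleftrightarrow> (\<forall>i<r. \<forall>j<r. A i j = A j i)"
proof
  show "transpose_mat (mat_of_rmat r r A) = mat_of_rmat r r A \<Longrightarrow> \<forall>i<r. \<forall>j<r. A i j = A j i"
    by (metis index_mat_of_rmat index_transpose_mat(1) mat_of_rmat_carrier carrier_matD)
qed (intro eq_matI, auto simp: mat_of_rmat_def)

lemma mat_of_rmat_eq_one_iff:
  "mat_of_rmat r r A = 1\<^sub>m r \<longleftrightarrow> (\<forall>i<r. \<forall>j<r. A i j = (if i = j then 1 else 0))"
proof
  show "mat_of_rmat r r A = 1\<^sub>m r \<Longrightarrow> \<forall>i<r. \<forall>j<r. A i j = (if i = j then 1 else 0)"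
    by (metis index_mat_of_rmat index_one_mat(1))
qed (intro eq_matI, auto simp: mat_of_rmat_def)

lemma supported_eqI:
  "supported r c A \<Longrightarrow> supported r c B \<Longrightarrow> mat_of_rmat r c A = mat_of_rmat r c B \<Longrightarrow> A = B"
  unfolding supported_def mat_of_rmat_eq_iff by (intro ext) (metis not_le)

text \<open>Both \<open>pinv\<close> and \<open>mat_inv\<close> select the zero extension of a uniquely determined matrix.\<close>

lemma mat_of_rmat_the_supported:
  assumes X0: "X0 \<in> carrier_mat r c" and "Q X0"
    and unique: "\<And>Y. Y \<in> carrier_mat r c \<Longrightarrow> Q Y \<Longrightarrow> Y = X0"
  shows "mat_of_rmat r c (THE X. supported r c X \<and> Q (mat_of_rmat r c X)) = X0"
proof -
  define X where "X i j = (if i < r \<and> j < c then X0 $$ (i, j) else 0)" for i j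
  have mX: "mat_of_rmat r c X = X0" using X0 by (intro eq_matI) (auto simp: X_def)
  have sX: "supported r c X" by (auto simp: supported_def X_def)
  have "(THE X. supported r c X \<and> Q (mat_of_rmat r c X)) = X"
  proof (rule the_equality)
    show "supported r c X \<and> Q (mat_of_rmat r c X)" using sX mX \<open>Q X0\<close> by simp
  next
    fix Y assume "supported r c Y \<and> Q (mat_of_rmat r c Y)"
    then show "Y = X" using unique[of "mat_of_rmat r c Y"] supported_eqI[of r c Y X] sX mX by simp
  qed
  then show ?thesis using mX by simp
qed

lemma pinv_mmul_left:
  assumes inj: "\<And>v. \<forall>i<r. (\<Sum>k<c. M i k * v k) = 0 \<Longrightarrow> \<forall>k<c. v k = 0"
  shows "\<forall>k<c. \<forall>l<c. mmul (pinv r c M) r M k l = (if k = l then 1 else 0)"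
proof -
  let ?M = "mat_of_rmat r c M"
  have "v = 0\<^sub>v c" if v: "v \<in> carrier_vec c" and Mv: "?M *\<^sub>v v = 0\<^sub>v r" for v
  proof -
    have "\<forall>i<r. (\<Sum>k<c. M i k * v $ k) = 0"
    proof (intro allI impI)
      fix i assume "i < r"
      then have "(?M *\<^sub>v v) $ i = 0" using Mv by simp
      then show "(\<Sum>k<c. M i k * v $ k) = 0"
        using \<open>i < r\<close> v by (simp add: mat_of_rmat_def scalar_prod_def atLeast0LessThan)
    qed
    then show ?thesis using inj[of "\<lambda>k. v $ k"] v by (intro eq_vecI) auto
  qed
  then obtain X where X: "X \<in> carrier_mat c r" "penrose_conditions ?M X" and XM: "X * ?M = 1\<^sub>m c"
    using penrose_conditions_full_column_rank[OF mat_of_rmat_carrier] by blast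
  have pinv_eq: "pinv r c M = (THE X. supported c r X \<and> penrose_conditions ?M (mat_of_rmat c r X))"
    unfolding pinv_def penrose_conditions_def mat_of_rmat_mmul[symmetric] mat_of_rmat_eq_iff
      transpose_mat_of_rmat_eq_iff by (rule arg_cong[where f = The]) blast
  have "mat_of_rmat c r (pinv r c M) = X"
    unfolding pinv_eq
  proof (rule mat_of_rmat_the_supported[OF X(1)])
    show "penrose_conditions ?M X" by (rule X(2))
    show "Y = X" if "Y \<in> carrier_mat c r" "penrose_conditions ?M Y" for Y
      using penrose_conditions_unique[OF mat_of_rmat_carrier that(1) X(1) that(2) X(2)] .
  qed
  then have "mat_of_rmat c c (mmul (pinv r c M) r M) = 1\<^sub>m c" using XM by (simp add: mat_of_rmat_mmul)
  then show ?thesis by (simp add: mat_of_rmat_eq_one_iff)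
qed

lemma mat_inv_mmul:
  assumes "mat_invertible N F"
  shows "\<forall>i<N. \<forall>j<N. mmul F N (mat_inv N F) i j = (if i = j then 1 else 0)
                    \<and> mmul (mat_inv N F) N F i j = (if i = j then 1 else 0)"
proof -
  let ?F = "mat_of_rmat N N F"
  let ?Q = "\<lambda>B. ?F * B = 1\<^sub>m N \<and> B * ?F = 1\<^sub>m N"
  obtain B where B: "?Q (mat_of_rmat N N B)"
    using assms unfolding mat_invertible_def mat_of_rmat_mmul[symmetric] mat_of_rmat_eq_one_iff
    by blast
  moreover have "Y = mat_of_rmat N N B" if "Y \<in> carrier_mat N N" "?Q Y" for Y
  proof -
    have "Y = Y * (?F * mat_of_rmat N N B)" using that B by simp
    also have "\<dots> = Y * ?F * mat_of_rmat N N B"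
      by (rule assoc_mult_mat[symmetric]) (use that(1) in auto)
    finally show ?thesis using that by simp
  qed
  moreover have "mat_inv N F = (THE X. supported N N X \<and> ?Q (mat_of_rmat N N X))"
    unfolding mat_inv_def mat_of_rmat_mmul[symmetric] mat_of_rmat_eq_one_iff
    by (rule arg_cong[where f = The]) blast
  ultimately have "?Q (mat_of_rmat N N (mat_inv N F))"
    using mat_of_rmat_the_supported[OF mat_of_rmat_carrier, of "?Q" N N B] by auto
  then show ?thesis unfolding mat_of_rmat_mmul[symmetric] mat_of_rmat_eq_one_iff by blast
qed

lemma sum_mmul:
  "(\<Sum>j<k. A i j * (\<Sum>l<m. B j l * v l)) = (\<Sum>l<m. mmul A k B i l * v l)"
proof -
  have "(\<Sum>j<k. A i j * (\<Sum>l<m. B j l * v l)) = (\<Sum>j<k. \<Sum>l<m. A i j * B j l * v l)"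
    by (simp add: sum_distrib_left mult.assoc)
  also have "\<dots> = (\<Sum>l<m. \<Sum>j<k. A i j * B j l * v l)" by (rule sum.swap)
  also have "\<dots> = (\<Sum>l<m. mmul A k B i l * v l)" by (simp add: mmul_def sum_distrib_right)
  finally show ?thesis .
qed

lemma sum_kronecker: "k < (c::nat) \<Longrightarrow> (\<Sum>l<c. (if k = l then 1 else 0) * u l) = (u k :: real)"
  by (simp add: of_bool_def[symmetric])

lemma left_inverse_solution:
  assumes XM: "\<forall>k<c. \<forall>l<c. mmul X r M k l = (if k = l then 1 else 0)"
    and Mu: "\<forall>i<r. (\<Sum>l<c. M i l * u l) = b i" and k: "k < c"
  shows "u k = (\<Sum>i<r. X k i * b i)"
proof -
  have "(\<Sum>i<r. X k i * b i) = (\<Sum>l<c. mmul X r M k l * u l)" using Mu by (simp add: sum_mmul[symmetric])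
  also have "\<dots> = u k" using XM k by (simp add: sum_kronecker)
  finally show ?thesis by simp
qed

lemma mat_invertible_the_solution:
  fixes F :: rmat and b :: "nat \<Rightarrow> real"
  assumes "mat_invertible N F"
  defines "Q \<equiv> \<lambda>z. (\<forall>i. N \<le> i \<longrightarrow> z i = 0) \<and> (\<forall>i<N. (\<Sum>j<N. F i j * z j) = b i)"
  shows "Q (THE z. Q z)"
proof -
  let ?B = "mat_inv N F"
  have FB: "\<forall>i<N. \<forall>j<N. mmul F N ?B i j = (if i = j then 1 else 0)"
    and BF: "\<forall>i<N. \<forall>j<N. mmul ?B N F i j = (if i = j then 1 else 0)"
    using mat_inv_mmul[OF assms(1)] by auto
  define z where "z i = (if i < N then \<Sum>j<N. ?B i j * b j else 0)" for i
  have "(\<Sum>j<N. F i j * z j) = b i" if "i < N" for i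
    using FB that by (simp add: z_def sum_mmul sum_kronecker)
  then have "Q z" unfolding Q_def z_def by simp
  moreover have "z' = z" if "Q z'" for z'
    using that left_inverse_solution[OF BF] unfolding Q_def z_def by (auto intro!: ext)
  ultimately show ?thesis by (rule theI)
qed

lemma row_sum_le_mat_norm_inf: "i < r \<Longrightarrow> (\<Sum>j<c. \<bar>A i j\<bar>) \<le> mat_norm_inf r c A"
  unfolding mat_norm_inf_def by (intro Max_ge) auto

lemma mat_norm_inf_nonneg: "0 < r \<Longrightarrow> 0 \<le> mat_norm_inf r c A"
  by (rule order_trans[OF sum_nonneg row_sum_le_mat_norm_inf]) auto

lemma abs_mat_vec_le:
  assumes i: "i < r" and b: "\<And>j. j < c \<Longrightarrow> \<bar>b j\<bar> \<le> B" and "0 \<le> B"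
  shows "\<bar>\<Sum>j<c. A i j * b j\<bar> \<le> mat_norm_inf r c A * B"
proof -
  have "\<bar>\<Sum>j<c. A i j * b j\<bar> \<le> (\<Sum>j<c. \<bar>A i j\<bar> * \<bar>b j\<bar>)"
    unfolding abs_mult[symmetric] by (rule sum_abs)
  also have "\<dots> \<le> (\<Sum>j<c. \<bar>A i j\<bar> * B)" using b by (intro sum_mono mult_left_mono) auto
  also have "\<dots> \<le> mat_norm_inf r c A * B"
    using row_sum_le_mat_norm_inf[OF i] \<open>0 \<le> B\<close> by (simp add: sum_distrib_right[symmetric] mult_right_mono)
  finally show ?thesis .
qed

no_notation Matrix.vec_index (infixl "$" 100)
no_notation Matrix.scalar_prod (infix "\<bullet>" 70)

section \<open>Quadratic Taylor bound\<close>

lemma lipschitz_constant_nonneg: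
  assumes "norm (g u - g v) \<le> L * norm (u - v)" and "u \<noteq> v"
  shows "0 \<le> L"
proof -
  have "0 \<le> L * norm (u - v)" by (rule order_trans[OF norm_ge_zero assms(1)])
  moreover have "0 < norm (u - v)" using assms(2) by simp
  ultimately show ?thesis by (simp add: zero_le_mult_iff)
qed

text \<open>The one-dimensional core of the quadratic Taylor bound: compare \<open>g\<close> with the parabolas
  \<open>g 0 + t g' 0 \<plusminus> K t\<^sup>2 / 2\<close> by monotonicity.\<close>

lemma deriv_lipschitz_at_0_taylor_bound:
  fixes g g' :: "real \<Rightarrow> real"
  assumes deriv: "\<And>t. (g has_real_derivative g' t) (at t)"
    and lip: "\<And>t. 0 \<le> t \<Longrightarrow> \<bar>g' t - g' 0\<bar> \<le> K * t"
  shows "\<bar>g 1 - g 0 - g' 0\<bar> \<le> K / 2"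
proof -
  define \<phi> where "\<phi> t = g t - t * g' 0 - K / 2 * t\<^sup>2" for t
  define \<psi> where "\<psi> t = g t - t * g' 0 + K / 2 * t\<^sup>2" for t
  have d\<phi>: "DERIV \<phi> t :> g' t - g' 0 - K * t" for t
    unfolding \<phi>_def by (auto intro!: derivative_eq_intros deriv)
  have d\<psi>: "DERIV \<psi> t :> g' t - g' 0 + K * t" for t
    unfolding \<psi>_def by (auto intro!: derivative_eq_intros deriv)
  have "\<phi> 1 \<le> \<phi> 0"
    by (rule DERIV_nonpos_imp_nonincreasing[of 0 1]) (use d\<phi> lip in \<open>force\<close>)+
  moreover have "\<psi> 0 \<le> \<psi> 1"
    by (rule DERIV_nonneg_imp_nondecreasing[of 0 1]) (use d\<psi> lip in \<open>force\<close>)+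
  ultimately show ?thesis unfolding \<phi>_def \<psi>_def abs_le_iff by simp
qed

lemma lipschitz_gradient_taylor_bound:
  fixes f :: "'a::real_inner \<Rightarrow> real"
  assumes deriv: "\<And>u. (f has_derivative (\<lambda>h. gradf u \<bullet> h)) (at u)"
    and lip: "\<And>u v. norm (gradf u - gradf v) \<le> L * norm (u - v)"
  shows "\<bar>f v - f u - gradf u \<bullet> (v - u)\<bar> \<le> L / 2 * (norm (v - u))\<^sup>2"
proof -
  define h where "h = v - u"
  have "((\<lambda>t. f (u + t *\<^sub>R h)) has_real_derivative gradf (u + t *\<^sub>R h) \<bullet> h) (at t)" for t
  proof -
    have "((\<lambda>t. u + t *\<^sub>R h) has_derivative (\<lambda>s. s *\<^sub>R h)) (at t)"
      by (auto intro!: derivative_eq_intros)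
    from diff_chain_at[OF this deriv]
    show ?thesis by (simp add: has_field_derivative_def o_def mult_commute_abs)
  qed
  moreover have "\<bar>gradf (u + t *\<^sub>R h) \<bullet> h - gradf (u + 0 *\<^sub>R h) \<bullet> h\<bar> \<le> L * (norm h)\<^sup>2 * t"
    if "0 \<le> t" for t
  proof -
    have "\<bar>gradf (u + t *\<^sub>R h) \<bullet> h - gradf u \<bullet> h\<bar> \<le> norm (gradf (u + t *\<^sub>R h) - gradf u) * norm h"
      by (metis Cauchy_Schwarz_ineq2 inner_diff_left)
    also have "\<dots> \<le> L * norm (t *\<^sub>R h) * norm h"
      using lip[of "u + t *\<^sub>R h" u] by (intro mult_right_mono) auto
    also have "\<dots> = L * (norm h)\<^sup>2 * t" using that by (simp add: power2_eq_square)
    finally show ?thesis by simp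
  qed
  ultimately have "\<bar>f (u + 1 *\<^sub>R h) - f (u + 0 *\<^sub>R h) - gradf (u + 0 *\<^sub>R h) \<bullet> h\<bar> \<le> L * (norm h)\<^sup>2 / 2"
    by (rule deriv_lipschitz_at_0_taylor_bound)
  then show ?thesis by (simp add: h_def)
qed

lemma coord_bij: "bij_betw (coord :: nat \<Rightarrow> 'n::finite) {..<CARD('n)} UNIV"
proof -
  have "\<exists>e. bij_betw e {..<CARD('n)} (UNIV :: 'n set)"
    using ex_bij_betw_nat_finite[of "UNIV :: 'n set"] by (auto simp: atLeast0LessThan)
  then show ?thesis unfolding coord_def by (rule someI_ex)
qed

lemma coord_idx_less: "coord_idx (k :: 'n::finite) < CARD('n)"
  unfolding coord_idx_def using coord_bij[where 'n='n]
  by (metis UNIV_I bij_betw_def inv_into_into lessThan_iff)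

lemma coord_coord_idx [simp]: "coord (coord_idx (k :: 'n::finite)) = k"
  unfolding coord_idx_def using coord_bij[where 'n='n]
  by (metis UNIV_I bij_betw_inv_into_right)

lemma coord_idx_coord [simp]: "i < CARD('n) \<Longrightarrow> coord_idx (coord i :: 'n::finite) = i"
  unfolding coord_idx_def using coord_bij[where 'n='n]
  by (metis bij_betw_inv_into_left lessThan_iff)

lemma inner_vec_coord:
  fixes u v :: "real^'n"
  shows "u \<bullet> v = (\<Sum>k<CARD('n). u $ coord k * v $ coord k)"
  using sum.reindex_bij_betw[OF coord_bij, of "\<lambda>k. u $ k * v $ k"] by (simp add: inner_vec_def)

lemma norm_le_sqrt_card_mult:
  fixes v :: "real^'n"
  assumes "\<And>k. \<bar>v $ k\<bar> \<le> m"
  shows "norm v \<le> sqrt (real CARD('n)) * m"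
proof -
  have m: "0 \<le> m" using assms[of undefined] by simp
  have "(\<Sum>k\<in>UNIV. (v $ k)\<^sup>2) \<le> (\<Sum>k\<in>(UNIV::'n set). m\<^sup>2)"
    using assms m by (intro sum_mono) (metis abs_le_square_iff abs_of_nonneg)
  then have "sqrt (\<Sum>k\<in>UNIV. (v $ k)\<^sup>2) \<le> sqrt (real CARD('n) * m\<^sup>2)"
    by (simp add: real_sqrt_le_mono)
  also have "\<dots> = sqrt (real CARD('n)) * m" using m by (simp add: real_sqrt_mult)
  finally show ?thesis by (simp add: norm_vec_def L2_set_def)
qed

lemma sum_lessThan_add_split: "(\<Sum>j<m + n. g j) = (\<Sum>j<m. g j) + (\<Sum>k<n. g (m + k :: nat))"
  by (induction n) (auto simp: add.assoc)

lemma Fhat_row_top: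
  fixes x :: "real^'n"
  assumes "i < p"
  shows "(\<Sum>j<p + CARD('n) + 1. Fhat x \<Delta> y p i j * w j)
       = (\<Sum>j<p. Phat x \<Delta> y p i j * w j) + (\<Sum>k<CARD('n) + 1. Mhat x \<Delta> y p i k * w (p + k))"
proof -
  have "(\<Sum>j<p + CARD('n) + 1. Fhat x \<Delta> y p i j * w j)
      = (\<Sum>j<p. Fhat x \<Delta> y p i j * w j) + (\<Sum>k<CARD('n) + 1. Fhat x \<Delta> y p i (p + k) * w (p + k))"
    unfolding add.assoc by (rule sum_lessThan_add_split)
  also have "\<dots> = (\<Sum>j<p. Phat x \<Delta> y p i j * w j) + (\<Sum>k<CARD('n) + 1. Mhat x \<Delta> y p i k * w (p + k))"
    using assms by (intro arg_cong2[where f = "(+)"] sum.cong) (auto simp: Fhat_def)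
  finally show ?thesis .
qed

lemma Fhat_row_bottom:
  fixes x :: "real^'n"
  assumes "p \<le> i" and "\<And>j. j < p \<Longrightarrow> w j = 0"
  shows "(\<Sum>j<p + CARD('n) + 1. Fhat x \<Delta> y p i j * w j) = 0"
proof -
  have "(\<Sum>j<p + CARD('n) + 1. Fhat x \<Delta> y p i j * w j)
      = (\<Sum>j<p. Fhat x \<Delta> y p i j * w j) + (\<Sum>k<CARD('n) + 1. Fhat x \<Delta> y p i (p + k) * w (p + k))"
    unfolding add.assoc by (rule sum_lessThan_add_split)
  also have "\<dots> = 0" using assms by (simp add: Fhat_def)
  finally show ?thesis .
qed

text \<open>The block \<open>(c, ghat) = (c, \<Delta> g)\<close> of the solution vector \<open>[\<lambda>hat; c; ghat]\<close>, re-indexed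
  from \<open>0\<close> and with the coordinates of \<open>g\<close> in the order given by \<open>coord\<close>.\<close>

definition affine_coeffs :: "real \<Rightarrow> real \<Rightarrow> real^'n \<Rightarrow> nat \<Rightarrow> real" where
  "affine_coeffs \<Delta> a v k = (if k = 0 then a else \<Delta> * v $ coord (k - 1))"

lemma Mhat_row_affine_coeffs:
  fixes x :: "real^'n"
  assumes "i < p" and "\<Delta> \<noteq> 0"
  shows "(\<Sum>k<CARD('n) + 1. Mhat x \<Delta> y p i k * affine_coeffs \<Delta> a v k) = a + v \<bullet> (y i - x)"
proof -
  have "(\<Sum>k<CARD('n) + 1. Mhat x \<Delta> y p i k * affine_coeffs \<Delta> a v k)
      = Mhat x \<Delta> y p i 0 * affine_coeffs \<Delta> a v 0
        + (\<Sum>k<CARD('n). Mhat x \<Delta> y p i (Suc k) * affine_coeffs \<Delta> a v (Suc k))"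
    by (simp only: Suc_eq_plus1[symmetric] sum.lessThan_Suc_shift)
  also have "\<dots> = a + (\<Sum>k<CARD('n). v $ coord k * (y i - x) $ coord k)"
    using assms by (simp add: Mhat_def affine_coeffs_def shat_def mult.commute)
  also have "\<dots> = a + v \<bullet> (y i - x)" by (simp add: inner_vec_coord)
  finally show ?thesis .
qed

lemma model_sol_affine_coeffs:
  fixes x :: "real^'n"
  assumes "\<Delta> \<noteq> 0" and "k < CARD('n) + 1"
  shows "model_sol f x \<Delta> y p (p + k) = affine_coeffs \<Delta> (model_c f x \<Delta> y p) (model_g f x \<Delta> y p) k"
  using assms by (cases k) (auto simp: affine_coeffs_def model_c_def model_g_def)

lemma model_H_mult:
  "model_H f x \<Delta> y p *v v
    = (\<Sum>j<p. (model_sol f x \<Delta> y p j / \<Delta>^4 * ((y j - x) \<bullet> v)) *\<^sub>R (y j - x))"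
proof (rule Finite_Cartesian_Product.vec_eq_iff[THEN iffD2], intro allI)
  let ?l = "\<lambda>j. model_sol f x \<Delta> y p j / \<Delta>^4"
  fix a
  have "(model_H f x \<Delta> y p *v v) $ a = (\<Sum>b\<in>UNIV. \<Sum>j<p. ?l j * (y j - x) $ a * (y j - x) $ b * v $ b)"
    by (simp add: matrix_vector_mult_def model_H_def sum_distrib_right)
  also have "\<dots> = (\<Sum>j<p. \<Sum>b\<in>UNIV. ?l j * (y j - x) $ a * (y j - x) $ b * v $ b)"
    by (rule sum.swap)
  also have "\<dots> = (\<Sum>j<p. (?l j * ((y j - x) \<bullet> v)) * (y j - x) $ a)"
    by (intro sum.cong) (auto simp: inner_vec_def sum_distrib_left sum_distrib_right mult_ac)
  finally show "(model_H f x \<Delta> y p *v v) $ a = (\<Sum>j<p. (?l j * ((y j - x) \<bullet> v)) *\<^sub>R (y j - x)) $ a"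
    by (simp add: sum_component)
qed

lemma Phat_row_model_H:
  fixes x :: "real^'n"
  assumes "i < p" and "\<Delta> \<noteq> 0"
  shows "(\<Sum>j<p. Phat x \<Delta> y p i j * model_sol f x \<Delta> y p j)
       = 1/2 * ((y i - x) \<bullet> (model_H f x \<Delta> y p *v (y i - x)))"
proof -
  have "shat x \<Delta> y i \<bullet> shat x \<Delta> y j = ((y i - x) \<bullet> (y j - x)) / \<Delta>\<^sup>2" for j
    unfolding shat_def by (simp only: inner_scaleR_left inner_scaleR_right) (simp add: power2_eq_square)
  then have "Phat x \<Delta> y p i j = 1/2 * ((y i - x) \<bullet> (y j - x))\<^sup>2 / \<Delta>^4" if "j < p" for j
    using assms that by (simp add: Phat_def power_divide)
  then have "(\<Sum>j<p. Phat x \<Delta> y p i j * model_sol f x \<Delta> y p j)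
      = (\<Sum>j<p. 1/2 * ((y i - x) \<bullet> (y j - x))\<^sup>2 / \<Delta>^4 * model_sol f x \<Delta> y p j)"
    by (intro sum.cong) auto
  also have "\<dots> = 1/2 * ((y i - x) \<bullet> (model_H f x \<Delta> y p *v (y i - x)))"
    by (simp add: model_H_mult inner_sum_right sum_distrib_left power2_eq_square inner_commute mult_ac)
  finally show ?thesis .
qed

section \<open>Error bounds for the minimum Frobenius norm model\<close>

locale min_frobenius_interpolation =
  fixes f :: "real^'n \<Rightarrow> real" and gradf :: "real^'n \<Rightarrow> real^'n"
    and L \<Delta> \<beta> :: real and x :: "real^'n" and y :: "nat \<Rightarrow> real^'n" and p :: nat
  assumes deriv: "\<And>u. (f has_derivative (\<lambda>h. gradf u \<bullet> h)) (at u)"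
    and lip: "\<And>u v. norm (gradf u - gradf v) \<le> L * norm (u - v)"
    and Delta_pos: "\<Delta> > 0"
    and pts: "\<And>i. i < p \<Longrightarrow> norm (y i - x) \<le> \<beta> * \<Delta>"
    and F_inv: "mat_invertible (p + CARD('n) + 1) (Fhat x \<Delta> y p)"
begin

abbreviation "Finv_norm \<equiv> mat_norm_inf (p + CARD('n) + 1) (p + CARD('n) + 1)
  (mat_inv (p + CARD('n) + 1) (Fhat x \<Delta> y p))"

abbreviation "kappa_H \<equiv> L / 2 * real p * \<beta>^4 * Finv_norm"

lemma Delta_ne: "\<Delta> \<noteq> 0"
  using Delta_pos by simp

lemma L_nonneg: "0 \<le> L"
  by (rule lipschitz_constant_nonneg[where u = 0 and v = 1, OF lip]) simp

lemma Finv_norm_nonneg: "0 \<le> Finv_norm"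
  by (rule mat_norm_inf_nonneg) simp

lemma kappa_H_nonneg: "0 \<le> kappa_H"
  using L_nonneg Finv_norm_nonneg by simp

lemma model_sol_solves:
  "i < p + CARD('n) + 1 \<Longrightarrow>
    (\<Sum>j<p + CARD('n) + 1. Fhat x \<Delta> y p i j * model_sol f x \<Delta> y p j) = (if i < p then f (y i) else 0)"
  using mat_invertible_the_solution[OF F_inv, of "\<lambda>i. if i < p then f (y i) else 0"]
  unfolding model_sol_def by blast

lemma Finv_mmul_left:
  "\<forall>i<p + CARD('n) + 1. \<forall>j<p + CARD('n) + 1.
    mmul (mat_inv (p + CARD('n) + 1) (Fhat x \<Delta> y p)) (p + CARD('n) + 1) (Fhat x \<Delta> y p) i j
      = (if i = j then 1 else 0)"
  using mat_inv_mmul[OF F_inv] by blast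

lemma model_interpolates:
  assumes "i < p"
  shows "model f x \<Delta> y p (y i) = f (y i)"
proof -
  let ?c = "model_c f x \<Delta> y p" and ?g = "model_g f x \<Delta> y p"
  have "f (y i) = (\<Sum>j<p + CARD('n) + 1. Fhat x \<Delta> y p i j * model_sol f x \<Delta> y p j)"
    using model_sol_solves[of i] assms by simp
  also have "\<dots> = (\<Sum>j<p. Phat x \<Delta> y p i j * model_sol f x \<Delta> y p j)
      + (\<Sum>k<CARD('n) + 1. Mhat x \<Delta> y p i k * model_sol f x \<Delta> y p (p + k))"
    by (rule Fhat_row_top[OF assms])
  also have "(\<Sum>j<p. Phat x \<Delta> y p i j * model_sol f x \<Delta> y p j)
      = 1/2 * ((y i - x) \<bullet> (model_H f x \<Delta> y p *v (y i - x)))"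
    by (rule Phat_row_model_H[OF assms Delta_ne])
  also have "(\<Sum>k<CARD('n) + 1. Mhat x \<Delta> y p i k * model_sol f x \<Delta> y p (p + k))
      = (\<Sum>k<CARD('n) + 1. Mhat x \<Delta> y p i k * affine_coeffs \<Delta> ?c ?g k)"
    using Delta_ne by (intro sum.cong refl) (simp add: model_sol_affine_coeffs)
  also have "\<dots> = ?c + ?g \<bullet> (y i - x)"
    by (rule Mhat_row_affine_coeffs[OF assms Delta_ne])
  finally show ?thesis by (simp add: model_def)
qed

lemma taylor_at_points:
  assumes "i < p"
  shows "\<bar>f (y i) - f x - gradf x \<bullet> (y i - x)\<bar> \<le> L / 2 * (\<beta> * \<Delta>)\<^sup>2"
proof -
  have "\<bar>f (y i) - f x - gradf x \<bullet> (y i - x)\<bar> \<le> L / 2 * (norm (y i - x))\<^sup>2"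
    by (rule lipschitz_gradient_taylor_bound[OF deriv lip])
  also have "\<dots> \<le> L / 2 * (\<beta> * \<Delta>)\<^sup>2"
    using L_nonneg pts[OF assms] by (intro mult_left_mono power_mono) auto
  finally show ?thesis .
qed

lemma model_sol_bound:
  assumes "i < p"
  shows "\<bar>model_sol f x \<Delta> y p i\<bar> \<le> Finv_norm * (L / 2 * (\<beta> * \<Delta>)\<^sup>2)"
proof -
  let ?N = "p + CARD('n) + 1" and ?l = "model_sol f x \<Delta> y p"
  define w where "w j = (if j < p then 0 else affine_coeffs \<Delta> (f x) (gradf x) (j - p))" for j
  define r where "r j = (if j < p then f (y j) - f x - gradf x \<bullet> (y j - x) else 0)" for j
  have Fw: "(\<Sum>j<?N. Fhat x \<Delta> y p i j * w j) = (if i < p then f x + gradf x \<bullet> (y i - x) else 0)"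
    if "i < ?N" for i
  proof (cases "i < p")
    case True
    then have "(\<Sum>j<?N. Fhat x \<Delta> y p i j * w j)
        = (\<Sum>j<p. Phat x \<Delta> y p i j * w j) + (\<Sum>k<CARD('n) + 1. Mhat x \<Delta> y p i k * w (p + k))"
      by (rule Fhat_row_top)
    also have "\<dots> = (\<Sum>k<CARD('n) + 1. Mhat x \<Delta> y p i k * affine_coeffs \<Delta> (f x) (gradf x) k)"
      by (simp add: w_def)
    also have "\<dots> = f x + gradf x \<bullet> (y i - x)" by (rule Mhat_row_affine_coeffs[OF True Delta_ne])
    finally show ?thesis using True by simp
  next
    case False
    then show ?thesis using Fhat_row_bottom[of p i w] by (simp add: w_def)
  qed
  have "\<forall>i<?N. (\<Sum>j<?N. Fhat x \<Delta> y p i j * (?l j - w j)) = r i"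
    using model_sol_solves Fw by (simp add: right_diff_distrib sum_subtractf r_def)
  then have "?l i - w i = (\<Sum>j<?N. mat_inv ?N (Fhat x \<Delta> y p) i j * r j)"
    by (rule left_inverse_solution[OF Finv_mmul_left]) (use assms in simp)
  then have "\<bar>?l i\<bar> = \<bar>\<Sum>j<?N. mat_inv ?N (Fhat x \<Delta> y p) i j * r j\<bar>"
    using assms by (simp add: w_def)
  also have "\<dots> \<le> Finv_norm * (L / 2 * (\<beta> * \<Delta>)\<^sup>2)"
    using assms taylor_at_points L_nonneg by (intro abs_mat_vec_le) (auto simp: r_def)
  finally show ?thesis .
qed

lemma model_H_bound: "norm (model_H f x \<Delta> y p *v v) \<le> kappa_H * norm v"
proof -
  let ?l = "model_sol f x \<Delta> y p"
  have summand_bound: "norm ((?l j / \<Delta>^4 * ((y j - x) \<bullet> v)) *\<^sub>R (y j - x)) \<le> Finv_norm * (L / 2 * \<beta>^4) * norm v"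
    if j: "j < p" for j
  proof -
    have "\<bar>(y j - x) \<bullet> v\<bar> * norm (y j - x) \<le> norm (y j - x) * norm v * norm (y j - x)"
      by (intro mult_right_mono Cauchy_Schwarz_ineq2) simp
    also have "\<dots> = (norm (y j - x))\<^sup>2 * norm v" by (simp add: power2_eq_square)
    also have "\<dots> \<le> (\<beta> * \<Delta>)\<^sup>2 * norm v"
      using pts[OF j] by (intro mult_right_mono power_mono) auto
    finally have dv: "\<bar>(y j - x) \<bullet> v\<bar> * norm (y j - x) \<le> (\<beta> * \<Delta>)\<^sup>2 * norm v" .
    have "norm ((?l j / \<Delta>^4 * ((y j - x) \<bullet> v)) *\<^sub>R (y j - x))
        = \<bar>?l j\<bar> / \<Delta>^4 * (\<bar>(y j - x) \<bullet> v\<bar> * norm (y j - x))"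
      using Delta_pos by (simp add: abs_mult)
    also have "\<dots> \<le> Finv_norm * (L / 2 * (\<beta> * \<Delta>)\<^sup>2) / \<Delta>^4 * ((\<beta> * \<Delta>)\<^sup>2 * norm v)"
      by (rule mult_mono[OF divide_right_mono[OF model_sol_bound[OF j]] dv])
        (use Delta_pos Finv_norm_nonneg L_nonneg in auto)
    also have "\<dots> = Finv_norm * (L / 2 * \<beta>^4) * norm v"
      using Delta_pos by (simp add: field_simps power2_eq_square power4_eq_xxxx)
    finally show ?thesis .
  qed
  have "norm (model_H f x \<Delta> y p *v v)
      \<le> (\<Sum>j<p. norm ((?l j / \<Delta>^4 * ((y j - x) \<bullet> v)) *\<^sub>R (y j - x)))"
    unfolding model_H_mult by (rule norm_sum)
  also have "\<dots> \<le> (\<Sum>j<p. Finv_norm * (L / 2 * \<beta>^4) * norm v)"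
    by (intro sum_mono summand_bound) simp
  also have "\<dots> = kappa_H * norm v" by simp
  finally show ?thesis .
qed

lemma model_H_quadratic_bound: "\<bar>v \<bullet> (model_H f x \<Delta> y p *v v)\<bar> \<le> kappa_H * (norm v)\<^sup>2"
proof -
  have "\<bar>v \<bullet> (model_H f x \<Delta> y p *v v)\<bar> \<le> norm v * (kappa_H * norm v)"
    by (rule order_trans[OF Cauchy_Schwarz_ineq2 mult_left_mono[OF model_H_bound]]) simp
  then show ?thesis by (simp add: power2_eq_square mult_ac)
qed

lemma Mhat_columns_independent:
  assumes "\<forall>i<p. (\<Sum>k<CARD('n) + 1. Mhat x \<Delta> y p i k * v k) = 0"
  shows "\<forall>k<CARD('n) + 1. v k = 0"
proof (intro allI impI)
  fix k assume k: "k < CARD('n) + 1"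
  let ?N = "p + CARD('n) + 1"
  define w where "w j = (if j < p then 0 else v (j - p))" for j
  have "\<forall>i<?N. (\<Sum>j<?N. Fhat x \<Delta> y p i j * w j) = 0"
  proof (intro allI impI)
    fix i assume "i < ?N"
    show "(\<Sum>j<?N. Fhat x \<Delta> y p i j * w j) = 0"
    proof (cases "i < p")
      case True
      have "(\<Sum>j<?N. Fhat x \<Delta> y p i j * w j)
          = (\<Sum>j<p. Phat x \<Delta> y p i j * w j) + (\<Sum>k<CARD('n) + 1. Mhat x \<Delta> y p i k * w (p + k))"
        by (rule Fhat_row_top[OF True])
      also have "\<dots> = (\<Sum>k<CARD('n) + 1. Mhat x \<Delta> y p i k * v k)" by (simp add: w_def)
      also have "\<dots> = 0" using assms True by blast
      finally show ?thesis .
    next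
      case False
      then show ?thesis using Fhat_row_bottom[of p i w] by (simp add: w_def)
    qed
  qed
  then have "w (p + k) = (\<Sum>j<?N. mat_inv ?N (Fhat x \<Delta> y p) (p + k) j * 0)"
    by (rule left_inverse_solution[OF Finv_mmul_left]) (use k in simp)
  then show "v k = 0" by (simp add: w_def)
qed

abbreviation "pinv_norm \<equiv> mat_norm_inf (CARD('n) + 1) p (pinv p (CARD('n) + 1) (Mhat x \<Delta> y p))"

lemma pinv_norm_nonneg: "0 \<le> pinv_norm"
  by (rule mat_norm_inf_nonneg) simp

lemma interpolation_residual_bound:
  assumes "i < p"
  shows "\<bar>f (y i) - f x - gradf x \<bullet> (y i - x) - 1/2 * ((y i - x) \<bullet> (model_H f x \<Delta> y p *v (y i - x)))\<bar>
    \<le> (L + kappa_H) / 2 * (\<beta> * \<Delta>)\<^sup>2"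
proof -
  let ?T = "f (y i) - f x - gradf x \<bullet> (y i - x)"
    and ?Q = "(y i - x) \<bullet> (model_H f x \<Delta> y p *v (y i - x))"
  have "(norm (y i - x))\<^sup>2 \<le> (\<beta> * \<Delta>)\<^sup>2" using pts[OF assms] by (intro power_mono) auto
  then have Q: "\<bar>?Q\<bar> \<le> kappa_H * (\<beta> * \<Delta>)\<^sup>2"
    using model_H_quadratic_bound kappa_H_nonneg by (meson mult_left_mono order_trans)
  have "\<bar>?T - 1/2 * ?Q\<bar> \<le> \<bar>?T\<bar> + \<bar>?Q\<bar> / 2"
    using abs_triangle_ineq4[of ?T "1/2 * ?Q"] by simp
  also have "\<dots> \<le> L / 2 * (\<beta> * \<Delta>)\<^sup>2 + kappa_H * (\<beta> * \<Delta>)\<^sup>2 / 2"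
    using taylor_at_points[OF assms] Q by (intro add_mono divide_right_mono) auto
  also have "\<dots> = (L + kappa_H) / 2 * (\<beta> * \<Delta>)\<^sup>2" by (simp add: field_simps)
  finally show ?thesis .
qed

lemma linear_part_error:
  defines "R \<equiv> (L + kappa_H) / 2 * (\<beta> * \<Delta>)\<^sup>2"
  shows "\<bar>model_c f x \<Delta> y p - f x\<bar> \<le> pinv_norm * R"
    and "norm (model_g f x \<Delta> y p - gradf x) \<le> sqrt (real CARD('n)) * (pinv_norm * R / \<Delta>)"
proof -
  let ?c = "model_c f x \<Delta> y p" and ?g = "model_g f x \<Delta> y p" and ?M = "Mhat x \<Delta> y p"
  define u where "u = affine_coeffs \<Delta> (?c - f x) (?g - gradf x)"
  define r where "r i = f (y i) - f x - gradf x \<bullet> (y i - x)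
    - 1/2 * ((y i - x) \<bullet> (model_H f x \<Delta> y p *v (y i - x)))" for i
  have Mu: "\<forall>i<p. (\<Sum>l<CARD('n) + 1. ?M i l * u l) = r i"
  proof (intro allI impI)
    fix i assume i: "i < p"
    have "(\<Sum>l<CARD('n) + 1. ?M i l * u l) = (?c - f x) + (?g - gradf x) \<bullet> (y i - x)"
      unfolding u_def by (rule Mhat_row_affine_coeffs[OF i Delta_ne])
    also have "\<dots> = r i"
      using model_interpolates[OF i] by (simp add: model_def r_def inner_diff_left)
    finally show "(\<Sum>l<CARD('n) + 1. ?M i l * u l) = r i" .
  qed
  have "0 \<le> R" unfolding R_def using L_nonneg kappa_H_nonneg by simp
  have u_bound: "\<bar>u k\<bar> \<le> pinv_norm * R" if k: "k < CARD('n) + 1" for k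
  proof -
    have "u k = (\<Sum>i<p. pinv p (CARD('n) + 1) ?M k i * r i)"
      by (rule left_inverse_solution[OF pinv_mmul_left[OF Mhat_columns_independent] Mu k])
    also have "\<bar>\<dots>\<bar> \<le> pinv_norm * R"
      using interpolation_residual_bound \<open>0 \<le> R\<close> k
      unfolding r_def R_def by (intro abs_mat_vec_le) auto
    finally show ?thesis .
  qed
  show "\<bar>?c - f x\<bar> \<le> pinv_norm * R" using u_bound[of 0] by (simp add: u_def affine_coeffs_def)
  have "\<bar>(?g - gradf x) $ k\<bar> \<le> pinv_norm * R / \<Delta>" for k
  proof -
    have "\<Delta> * \<bar>(?g - gradf x) $ k\<bar> \<le> pinv_norm * R"
      using u_bound[of "Suc (coord_idx k)"] coord_idx_less[of k] Delta_pos
      by (simp add: u_def affine_coeffs_def abs_mult)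
    then show ?thesis using Delta_pos by (simp add: field_simps)
  qed
  then show "norm (?g - gradf x) \<le> sqrt (real CARD('n)) * (pinv_norm * R / \<Delta>)"
    by (rule norm_le_sqrt_card_mult)
qed

abbreviation "kappa_mf \<equiv> (L + kappa_H) / 2 * (1 + sqrt (real CARD('n))) * \<beta>^2 * pinv_norm
  + (L + kappa_H) / 2"

lemma model_value_error:
  assumes "z \<in> cball x \<Delta>"
  shows "\<bar>model f x \<Delta> y p z - f z\<bar> \<le> kappa_mf * \<Delta>\<^sup>2"
proof -
  let ?c = "model_c f x \<Delta> y p" and ?g = "model_g f x \<Delta> y p" and ?H = "model_H f x \<Delta> y p"
  define h where "h = z - x"
  define K where "K = kappa_H"
  define S where "S = sqrt (real CARD('n))"
  define P where "P = pinv_norm * ((L + K) / 2 * (\<beta> * \<Delta>)\<^sup>2)"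
  have h: "norm h \<le> \<Delta>" using assms by (simp add: h_def dist_norm norm_minus_commute)
  have "0 \<le> K" "0 \<le> P" "0 \<le> S"
    unfolding K_def P_def S_def using kappa_H_nonneg L_nonneg pinv_norm_nonneg by simp_all
  have "model f x \<Delta> y p z - f z
      = (?c - f x) + (?g - gradf x) \<bullet> h + 1/2 * (h \<bullet> (?H *v h)) - (f z - f x - gradf x \<bullet> h)"
    by (simp add: model_def h_def inner_diff_left)
  moreover have "\<bar>?c - f x\<bar> \<le> P" unfolding P_def K_def by (rule linear_part_error(1))
  moreover have "\<bar>(?g - gradf x) \<bullet> h\<bar> \<le> S * P"
  proof -
    have "\<bar>(?g - gradf x) \<bullet> h\<bar> \<le> norm (?g - gradf x) * norm h" by (rule Cauchy_Schwarz_ineq2)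
    also have "\<dots> \<le> S * (P / \<Delta>) * \<Delta>"
      using linear_part_error(2) h \<open>0 \<le> S\<close> \<open>0 \<le> P\<close> Delta_pos
      unfolding P_def K_def S_def by (intro mult_mono) auto
    finally show ?thesis using Delta_pos by simp
  qed
  moreover have "\<bar>1/2 * (h \<bullet> (?H *v h))\<bar> \<le> K / 2 * \<Delta>\<^sup>2"
  proof -
    have "\<bar>h \<bullet> (?H *v h)\<bar> \<le> K * (norm h)\<^sup>2" unfolding K_def by (rule model_H_quadratic_bound)
    also have "\<dots> \<le> K * \<Delta>\<^sup>2" using h \<open>0 \<le> K\<close> by (intro mult_left_mono power_mono) auto
    finally show ?thesis by simp
  qed
  moreover have "\<bar>f z - f x - gradf x \<bullet> h\<bar> \<le> L / 2 * \<Delta>\<^sup>2"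
  proof -
    have "\<bar>f z - f x - gradf x \<bullet> h\<bar> \<le> L / 2 * (norm h)\<^sup>2"
      unfolding h_def by (rule lipschitz_gradient_taylor_bound[OF deriv lip])
    also have "\<dots> \<le> L / 2 * \<Delta>\<^sup>2" using h L_nonneg by (intro mult_left_mono power_mono) auto
    finally show ?thesis .
  qed
  moreover have "kappa_mf * \<Delta>\<^sup>2 = P + S * P + K / 2 * \<Delta>\<^sup>2 + L / 2 * \<Delta>\<^sup>2"
    unfolding P_def S_def K_def by (simp add: field_simps power2_eq_square)
  ultimately show ?thesis by linarith
qed

lemma model_grad_error:
  assumes "z \<in> cball x \<Delta>"
  shows "norm (model_grad f x \<Delta> y p z - gradf z) \<le> (2 * kappa_mf + 2 * kappa_H) * \<Delta>"
proof -
  let ?g = "model_g f x \<Delta> y p" and ?H = "model_H f x \<Delta> y p"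
  define h where "h = z - x"
  define K where "K = kappa_H"
  define S where "S = sqrt (real CARD('n))"
  define Q where "Q = (L + K) * \<beta>\<^sup>2 * pinv_norm * \<Delta>"
  have h: "norm h \<le> \<Delta>" using assms by (simp add: h_def dist_norm norm_minus_commute)
  have "0 \<le> K" "0 \<le> Q" "0 \<le> S"
    unfolding K_def Q_def S_def using kappa_H_nonneg L_nonneg pinv_norm_nonneg Delta_pos by simp_all
  have grad_eq: "model_grad f x \<Delta> y p z - gradf z = (?g - gradf x) + ?H *v h - (gradf z - gradf x)"
    by (simp add: model_grad_def h_def algebra_simps)
  have "norm (model_grad f x \<Delta> y p z - gradf z)
      \<le> norm (?g - gradf x) + norm (?H *v h) + norm (gradf z - gradf x)"
    unfolding grad_eq using norm_triangle_ineq[of "?g - gradf x" "?H *v h"]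
      norm_triangle_ineq4[of "?g - gradf x + ?H *v h" "gradf z - gradf x"] by linarith
  moreover have "norm (?g - gradf x) \<le> S * Q / 2"
  proof -
    have SQ: "S * Q / 2 = sqrt (real CARD('n)) * (pinv_norm * ((L + kappa_H) / 2 * (\<beta> * \<Delta>)\<^sup>2) / \<Delta>)"
      unfolding S_def Q_def K_def using Delta_pos by (simp add: field_simps power2_eq_square)
    show ?thesis by (subst SQ) (rule linear_part_error(2))
  qed
  moreover have "norm (?H *v h) \<le> K * \<Delta>"
    unfolding K_def by (rule order_trans[OF model_H_bound mult_left_mono[OF h kappa_H_nonneg]])
  moreover have "norm (gradf z - gradf x) \<le> L * \<Delta>"
    using lip[of z x] mult_left_mono[OF h L_nonneg] unfolding h_def by linarith
  moreover have "(2 * kappa_mf + 2 * kappa_H) * \<Delta> = Q + S * Q + L * \<Delta> + K * \<Delta> + 2 * (K * \<Delta>)"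
    unfolding Q_def S_def K_def by (simp add: field_simps)
  moreover have "0 \<le> S * Q" "0 \<le> K * \<Delta>"
    using \<open>0 \<le> S\<close> \<open>0 \<le> Q\<close> \<open>0 \<le> K\<close> Delta_pos by simp_all
  ultimately show ?thesis using \<open>0 \<le> Q\<close> by linarith
qed

end

theorem theorem5p15:
  fixes f :: "real^'n \<Rightarrow> real" and gradf :: "real^'n \<Rightarrow> real^'n"
    and L \<Delta> \<beta> :: real and x :: "real^'n" and y :: "nat \<Rightarrow> real^'n" and p :: nat
  assumes bdd_below: "\<exists>b. \<forall>u. b \<le> f u"
    and deriv: "\<And>u. (f has_derivative (\<lambda>h. gradf u \<bullet> h)) (at u)"
    and cont: "continuous_on UNIV gradf"
    and lip: "\<And>u v. norm (gradf u - gradf v) \<le> L * norm (u - v)"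
    and p_lo: "CARD('n) + 2 \<le> p"
    and p_hi: "p \<le> (CARD('n) + 1) * (CARD('n) + 2) div 2 - 1"
    and Delta_pos: "\<Delta> > 0" and beta_pos: "\<beta> > 0"
    and pts: "\<And>i. i < p \<Longrightarrow> norm (y i - x) \<le> \<beta> * \<Delta>"
    and F_inv: "mat_invertible (p + CARD('n) + 1) (Fhat x \<Delta> y p)"
  shows "let \<kappa>H = L / 2 * real p * \<beta>^4
               * mat_norm_inf (p + CARD('n) + 1) (p + CARD('n) + 1)
                   (mat_inv (p + CARD('n) + 1) (Fhat x \<Delta> y p));
             \<kappa>mf = (L + \<kappa>H) / 2 * (1 + sqrt (real CARD('n))) * \<beta>^2
                   * mat_norm_inf (CARD('n) + 1) p (pinv p (CARD('n) + 1) (Mhat x \<Delta> y p))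
                 + (L + \<kappa>H) / 2;
             \<kappa>mg = 2 * \<kappa>mf + 2 * \<kappa>H
         in \<forall>z \<in> cball x \<Delta>.
              \<bar>model f x \<Delta> y p z - f z\<bar> \<le> \<kappa>mf * \<Delta>^2
            \<and> norm (model_grad f x \<Delta> y p z - gradf z) \<le> \<kappa>mg * \<Delta>"
proof -
  interpret min_frobenius_interpolation f gradf L \<Delta> \<beta> x y p
    using deriv lip Delta_pos pts F_inv by unfold_locales
  show ?thesis
    unfolding Let_def using model_value_error model_grad_error by blast
qed

end
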